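(* Let $(\mathcal{F}_n)_{n=0}^\infty$ be a sequence of regular families such that $\mathcal{F}_0$ contains all singleton subsets of $\mathbb{N}$, and let $(\theta_n)_{n=1}^\infty$ be a nonincreasing null sequence in $(0,1)$. Choose a strictly increasing sequence of integers $(m_k)_{k=0}^\infty$ with $m_0=0$ and $\theta_{m_{k+1}}\le \frac12\theta_{m_k}$ for all $k\in\mathbb{N}$. For $n\in\mathbb{N}$ with $m_{k-1}<n\le m_k$, let $\mathcal{G}_n=\{F\in\mathcal{F}_n : k\le F\}\cup\mathcal{S}_0$. Then $T(\mathcal{F}_0,(\theta_n,\mathcal{F}_n)_{n=1}^\infty)$ is isomorphic to $T(\mathcal{F}_0,(\theta_n,\mathcal{G}_n)_{n=1}^\infty)$ via the formal identity (i.e. the two norms are equivalent on $c_{00}$).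
   Context: $[\mathbb{N}]^{<\infty}$ denotes the set of finite subsets of $\mathbb{N}$, topologized as a subspace of $2^{\mathbb{N}}$ with the product topology. For finite $E,F\subseteq\mathbb{N}$, $E<F$ means $\max E<\min F$ and $E\le F$ means $\max E\le\min F$ (with $\max\emptyset=0$, $\min\emptyset=\infty$); $k\le F$ abbreviates $\{k\}\le F$. A family $\mathcal{F}\subseteq[\mathbb{N}]^{<\infty}$ is regular if it is hereditary ($G\subseteq F\in\mathcal{F}\Rightarrow G\in\mathcal{F}$), spreading (if $\{n_1<\dots<n_k\}\in\mathcal{F}$ and $m_1<\dots<m_k$ with $m_i\ge n_i$ for all $i$, then $\{m_1,\dots,m_k\}\in\mathcal{F}$), and compact. $\mathcal{S}_0=\{\{n\}:n\in\mathbb{N}\}\cup\{\emptyset\}$. $c_{00}$ is the space of finitely supported real sequences with unit vectors $(e_k)$; for $x=\sum a_ke_k$ and finite $E$, $Ex=\sum_{k\in E}a_ke_k$, and for a regular $\mathcal{F}$, $\|x\|_{\mathcal{F}}=\sup_{F\in\mathcal{F}}\sum_{k\in F}|a_k|$. A sequence $E_1<\dots<E_k$ of finite sets is $\mathcal{F}$-admissible if $\{\min E_1,\dots,\min E_k\}\in\mathcal{F}$. Given regular families $(\mathcal{F}_n)_{n\ge0}$ with $\mathcal{F}_0$ containing all singletons and a nonincreasing null sequence $(\theta_n)_{n\ge1}$ in $(0,1)$, the mixed Tsirelson space $T(\mathcal{F}_0,(\theta_n,\mathcal{F}_n)_{n=1}^\infty)$ is the completion of $c_{00}$ under the norm implicitly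 defined by $\|x\|=\max\{\|x\|_{\mathcal{F}_0},\ \sup_{n\in\mathbb{N}}\sup\theta_n\sum_{i=1}^k\|E_ix\|\}$, the inner supremum over all $\mathcal{F}_n$-admissible sequences $(E_i)_{i=1}^k$. *)

theory Defs
  imports "HOL-Analysis.Analysis"
begin

text \<open>Families of finite subsets of nat; the paper's [N]^{<infinity} is viewed as a
subspace of 2^N, identified with nat \<Rightarrow> bool carrying the product of discrete topologies.\<close>

definition hereditary :: "nat set set \<Rightarrow> bool" where
  "hereditary \<F> \<longleftrightarrow> (\<forall>F G. F \<in> \<F> \<longrightarrow> G \<subseteq> F \<longrightarrow> G \<in> \<F>)"

definition spreading :: "nat set set \<Rightarrow> bool" where
  "spreading \<F> \<longleftrightarrow> (\<forall>ns ms. sorted_wrt (<) ns \<longrightarrow> sorted_wrt (<) ms \<longrightarrow>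
      length ns = length ms \<longrightarrow> (\<forall>i<length ns. ns ! i \<le> ms ! i) \<longrightarrow>
      set ns \<in> \<F> \<longrightarrow> set ms \<in> \<F>)"

definition compact_family :: "nat set set \<Rightarrow> bool" where
  "compact_family \<F> \<longleftrightarrow>
     compactin (product_topology (\<lambda>_::nat. discrete_topology (UNIV::bool set)) UNIV)
               ((\<lambda>F n. n \<in> F) ` \<F>)"

definition regular_family :: "nat set set \<Rightarrow> bool" where
  "regular_family \<F> \<longleftrightarrow> (\<forall>F\<in>\<F>. finite F) \<and> hereditary \<F> \<and> spreading \<F> \<and> compact_family \<F>"

definition S0 :: "nat set set" where
  "S0 = {{n} | n. True} \<union> {{}}"

definition c00 :: "(nat \<Rightarrow> real) set" where
  "c00 = {x. finite {k. x k \<noteq> 0}}"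

definition restr :: "nat set \<Rightarrow> (nat \<Rightarrow> real) \<Rightarrow> nat \<Rightarrow> real" where
  "restr E x = (\<lambda>k. if k \<in> E then x k else 0)"

definition fam_norm :: "nat set set \<Rightarrow> (nat \<Rightarrow> real) \<Rightarrow> real" where
  "fam_norm \<F> x = Sup (insert 0 ((\<lambda>F. \<Sum>k\<in>F. \<bar>x k\<bar>) ` \<F>))"

text \<open>An F-admissible sequence E_1 < ... < E_k of finite (nonempty) sets, as a list.
Empty sets contribute nothing to the norm, so they are omitted.\<close>
definition admissible :: "nat set set \<Rightarrow> nat set list \<Rightarrow> bool" where
  "admissible \<F> Es \<longleftrightarrow> (\<forall>E\<in>set Es. finite E \<and> E \<noteq> {}) \<and>
     sorted_wrt (\<lambda>A B. Max A < Min B) Es \<and> set (map Min Es) \<in> \<F>"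

text \<open>The implicitly defined mixed Tsirelson norm, realized in the standard way as the
supremum of the increasing iterates (the least solution of the implicit equation).\<close>
fun mt_iter :: "nat set set \<Rightarrow> (nat \<Rightarrow> real) \<Rightarrow> (nat \<Rightarrow> nat set set) \<Rightarrow> nat \<Rightarrow>
                 (nat \<Rightarrow> real) \<Rightarrow> real" where
  "mt_iter F0 \<theta> Fs 0 x = 0"
| "mt_iter F0 \<theta> Fs (Suc j) x =
     max (fam_norm F0 x)
         (Sup (insert 0 {\<theta> n * (\<Sum>E\<leftarrow>Es. mt_iter F0 \<theta> Fs j (restr E x)) | n Es.
                          n \<ge> 1 \<and> admissible (Fs n) Es}))"

definition mt_norm :: "nat set set \<Rightarrow> (nat \<Rightarrow> real) \<Rightarrow> (nat \<Rightarrow> nat set set) \<Rightarrow>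
                        (nat \<Rightarrow> real) \<Rightarrow> real" where
  "mt_norm F0 \<theta> Fs x = (SUP j. mt_iter F0 \<theta> Fs j x)"

text \<open>For n \<ge> 1, the unique k \<ge> 1 with m (k-1) < n \<le> m k.\<close>
definition block_index :: "(nat \<Rightarrow> nat) \<Rightarrow> nat \<Rightarrow> nat" where
  "block_index m n = (LEAST k. n \<le> m k)"

definition G_fam :: "(nat \<Rightarrow> nat set set) \<Rightarrow> (nat \<Rightarrow> nat) \<Rightarrow> nat \<Rightarrow> nat set set" where
  "G_fam Fs m n = {F \<in> Fs n. \<forall>i\<in>F. block_index m n \<le> i} \<union> S0"

end

(* An admissible sequence for G_n is admissible for F_n or consists of a single block, so the
   G-norm is dominated by the F-norm. Conversely, take an F_n-admissible sequence with
   m_(k-1) < n <= m_k and cut every block at k. The parts from k on form a G_n-admissible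
   sequence, because F_n is hereditary and spreading and the cut only raises the minima.
   The parts below k only see coordinates i < k, where theta_n <= theta_(m_i) <= 2^(1-i).
   Running this through the iterates of the implicit norm gives
   ||x||_F <= ||x||_G + sum_i 2^(1-i) |x_i| <= ||x||_G + 4 ||x||_(F_0) <= 5 ||x||_G. *)

theory Submission
  imports Defs
begin

definition supp :: "(nat \<Rightarrow> real) \<Rightarrow> nat set" where
  "supp x = {k. x k \<noteq> 0}"

definition weighted_l1 :: "(nat \<Rightarrow> real) \<Rightarrow> (nat \<Rightarrow> real) \<Rightarrow> real" where
  "weighted_l1 w x = (\<Sum>k\<in>supp x. w k * \<bar>x k\<bar>)"

abbreviation l1_norm :: "(nat \<Rightarrow> real) \<Rightarrow> real" where
  "l1_norm \<equiv> weighted_l1 (\<lambda>_. 1)"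

lemma c00_iff_finite_supp: "x \<in> c00 \<longleftrightarrow> finite (supp x)"
  by (simp add: c00_def supp_def)

lemma supp_restr: "supp (restr E x) = supp x \<inter> E"
  by (auto simp: supp_def restr_def)

lemma restr_in_c00: "x \<in> c00 \<Longrightarrow> restr E x \<in> c00"
  by (auto simp: c00_iff_finite_supp supp_restr)

lemma restr_restr: "restr A (restr B x) = restr (A \<inter> B) x"
  by (auto simp: restr_def)

lemma restr_commute: "restr A (restr B x) = restr B (restr A x)"
  by (auto simp: restr_def)

lemma restr_UNIV [simp]: "restr UNIV x = x"
  by (simp add: restr_def)

lemma restr_empty [simp]: "restr {} x = (\<lambda>_. 0)"
  by (simp add: restr_def)

lemma restr_add: "restr A (\<lambda>k. x k + y k) = (\<lambda>k. restr A x k + restr A y k)"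
  by (auto simp: restr_def)

lemma restr_split_at: "restr E x = (\<lambda>k. restr E (restr {..<c} x) k + restr (E \<inter> {c..}) x k)"
  by (auto simp: restr_def)

lemma weighted_l1_eq_sum:
  assumes "finite S" "supp x \<subseteq> S"
  shows "weighted_l1 w x = (\<Sum>k\<in>S. w k * \<bar>x k\<bar>)"
  unfolding weighted_l1_def
  by (rule sum.mono_neutral_left) (use assms in \<open>auto simp: supp_def\<close>)

lemma weighted_l1_nonneg: "(\<And>k. 0 \<le> w k) \<Longrightarrow> 0 \<le> weighted_l1 w x"
  by (simp add: weighted_l1_def sum_nonneg)

lemma weighted_l1_mono:
  "(\<And>k. x k \<noteq> 0 \<Longrightarrow> v k \<le> w k) \<Longrightarrow> weighted_l1 v x \<le> weighted_l1 w x"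
  unfolding weighted_l1_def by (intro sum_mono mult_right_mono) (auto simp: supp_def)

lemma weighted_l1_scale: "c * weighted_l1 w x = weighted_l1 (\<lambda>k. c * w k) x"
  by (simp add: weighted_l1_def sum_distrib_left mult.assoc)

lemma weighted_l1_restr: "weighted_l1 w (restr E x) = (\<Sum>k\<in>supp x \<inter> E. w k * \<bar>x k\<bar>)"
  unfolding weighted_l1_def supp_restr by (rule sum.cong) (auto simp: restr_def)

lemma weighted_l1_restr_Un:
  assumes "x \<in> c00" "A \<inter> B = {}"
  shows "weighted_l1 w (restr (A \<union> B) x) = weighted_l1 w (restr A x) + weighted_l1 w (restr B x)"
proof -
  have "finite (supp x)" using assms(1) by (simp add: c00_iff_finite_supp)
  then have "(\<Sum>k\<in>supp x \<inter> A \<union> supp x \<inter> B. w k * \<bar>x k\<bar>)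
      = (\<Sum>k\<in>supp x \<inter> A. w k * \<bar>x k\<bar>) + (\<Sum>k\<in>supp x \<inter> B. w k * \<bar>x k\<bar>)"
    using assms(2) by (intro sum.union_disjoint) auto
  then show ?thesis by (simp add: weighted_l1_restr Int_Un_distrib)
qed

lemma weighted_l1_split:
  "x \<in> c00 \<Longrightarrow> weighted_l1 w x = weighted_l1 w (restr A x) + weighted_l1 w (restr (- A) x)"
  using weighted_l1_restr_Un[of x A "- A" w] by simp

lemma weighted_l1_restr_le:
  "x \<in> c00 \<Longrightarrow> (\<And>k. 0 \<le> w k) \<Longrightarrow> weighted_l1 w (restr A x) \<le> weighted_l1 w x"
  using weighted_l1_split[of x w A] weighted_l1_nonneg[of w "restr (- A) x"] by simp

lemma sum_list_weighted_l1_restr: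
  assumes "x \<in> c00" "sorted_wrt (\<lambda>A B. A \<inter> B = {}) Es"
  shows "(\<Sum>E\<leftarrow>Es. weighted_l1 w (restr E x)) = weighted_l1 w (restr (\<Union>(set Es)) x)"
  using assms(2)
proof (induction Es)
  case Nil
  then show ?case by (simp add: weighted_l1_def supp_def)
next
  case (Cons E Es)
  then have "E \<inter> \<Union>(set Es) = {}" by auto
  with Cons show ?case by (simp add: weighted_l1_restr_Un[OF assms(1)])
qed

lemma sum_list_weighted_l1_restr_le:
  assumes "x \<in> c00" "sorted_wrt (\<lambda>A B. A \<inter> B = {}) Es" "\<And>k. 0 \<le> w k"
  shows "(\<Sum>E\<leftarrow>Es. weighted_l1 w (restr E x)) \<le> weighted_l1 w x"
  using assms by (simp add: sum_list_weighted_l1_restr weighted_l1_restr_le)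

section \<open>Admissible sequences of blocks\<close>

lemma blocks_Min_sorted:
  assumes "\<forall>E\<in>set Es. finite E \<and> E \<noteq> {}" "sorted_wrt (\<lambda>A B. Max A < Min B) Es"
  shows "sorted_wrt (<) (map Min Es)"
  unfolding sorted_wrt_map
proof (rule sorted_wrt_mono_rel[OF _ assms(2)])
  fix A B assume "A \<in> set Es" "Max A < Min B"
  then show "Min A < Min B" using assms(1) by (meson Max_ge Min_in order_le_less_trans)
qed

lemma admissible_Min_sorted: "admissible \<F> Es \<Longrightarrow> sorted_wrt (<) (map Min Es)"
  unfolding admissible_def by (blast intro: blocks_Min_sorted)

lemma admissible_disjoint: "admissible \<F> Es \<Longrightarrow> sorted_wrt (\<lambda>A B. A \<inter> B = {}) Es"
  unfolding admissible_def
proof (elim conjE, rule sorted_wrt_mono_rel)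
  fix A B assume "\<forall>E\<in>set Es. finite E \<and> E \<noteq> {}" "A \<in> set Es" "B \<in> set Es" "Max A < Min B"
  then show "A \<inter> B = {}" by (metis Max_ge Min_le disjoint_iff leD order_le_less_trans)
qed

lemma sum_list_restr_le_l1:
  assumes "x \<in> c00" "admissible \<F> Es" "\<And>y. y \<in> c00 \<Longrightarrow> f y \<le> l1_norm y"
  shows "(\<Sum>E\<leftarrow>Es. f (restr E x)) \<le> l1_norm x"
proof -
  have "(\<Sum>E\<leftarrow>Es. f (restr E x)) \<le> (\<Sum>E\<leftarrow>Es. l1_norm (restr E x))"
    by (intro sum_list_mono assms(3) restr_in_c00 assms(1))
  also have "\<dots> \<le> l1_norm x"
    using assms(1) admissible_disjoint[OF assms(2)] by (rule sum_list_weighted_l1_restr_le) simp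
  finally show ?thesis .
qed

lemma admissible_S0_length:
  assumes adm: "admissible S0 Es"
  shows "length Es \<le> 1"
proof -
  have "distinct (map Min Es)"
    using adm admissible_Min_sorted strict_sorted_iff by blast
  then have "card (set (map Min Es)) = length Es"
    using distinct_card by fastforce
  moreover have "card A \<le> 1" if "A \<in> S0" for A :: "nat set"
    using that by (auto simp: S0_def)
  ultimately show ?thesis using adm by (metis admissible_def)
qed

lemma admissible_filter:
  assumes her: "hereditary \<F>" and adm: "admissible \<F> Es"
  shows "admissible \<F> (filter P Es)"
proof -
  have "set (map Min (filter P Es)) \<subseteq> set (map Min Es)" by auto
  then have "set (map Min (filter P Es)) \<in> \<F>"
    using her adm unfolding hereditary_def admissible_def by blast
  then show ?thesis using adm by (simp add: admissible_def sorted_wrt_filter)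
qed

lemma spreading_map_le:
  assumes "spreading \<F>" "set (map f xs) \<in> \<F>" "\<forall>x\<in>set xs. f x \<le> g x"
    "sorted_wrt (<) (map f xs)" "sorted_wrt (<) (map g xs)"
  shows "set (map g xs) \<in> \<F>"
proof -
  have "sorted_wrt (<) (map f xs) \<longrightarrow> sorted_wrt (<) (map g xs) \<longrightarrow>
      length (map f xs) = length (map g xs) \<longrightarrow>
      (\<forall>i<length (map f xs). map f xs ! i \<le> map g xs ! i) \<longrightarrow>
      set (map f xs) \<in> \<F> \<longrightarrow> set (map g xs) \<in> \<F>"
    using assms(1) unfolding spreading_def by blast
  then show ?thesis using assms(2-5) by simp
qed

lemma admissible_map_Int_atLeast:
  assumes spr: "spreading \<F>" and adm: "admissible \<F> Es" and ne: "\<forall>E\<in>set Es. E \<inter> {c..} \<noteq> {}"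
  shows "admissible \<F> (map (\<lambda>E. E \<inter> {c..}) Es)"
proof -
  have fin: "\<forall>E\<in>set Es. finite E" and srt: "sorted_wrt (\<lambda>A B. Max A < Min B) Es"
    and mins: "set (map Min Es) \<in> \<F>" using adm by (auto simp: admissible_def)
  have fin': "\<forall>E\<in>set (map (\<lambda>E. E \<inter> {c..}) Es). finite E \<and> E \<noteq> {}"
    using fin ne by auto
  have srt': "sorted_wrt (\<lambda>A B. Max A < Min B) (map (\<lambda>E. E \<inter> {c..}) Es)"
    unfolding sorted_wrt_map
  proof (rule sorted_wrt_mono_rel[OF _ srt])
    fix A B assume "A \<in> set Es" "B \<in> set Es" "Max A < Min B"
    moreover have "Max (A \<inter> {c..}) \<le> Max A" "Min B \<le> Min (B \<inter> {c..})"
      using \<open>A \<in> set Es\<close> \<open>B \<in> set Es\<close> fin ne by (auto intro: Max_mono Min_antimono)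
    ultimately show "Max (A \<inter> {c..}) < Min (B \<inter> {c..})" by linarith
  qed
  have "set (map (\<lambda>E. Min (E \<inter> {c..})) Es) \<in> \<F>"
  proof (rule spreading_map_le[OF spr mins])
    show "\<forall>E\<in>set Es. Min E \<le> Min (E \<inter> {c..})"
      using fin ne by (auto intro: Min_antimono)
    show "sorted_wrt (<) (map Min Es)" using adm by (rule admissible_Min_sorted)
    show "sorted_wrt (<) (map (\<lambda>E. Min (E \<inter> {c..})) Es)"
      using blocks_Min_sorted[OF fin' srt'] by (simp add: o_def)
  qed
  with fin' srt' show ?thesis by (simp add: admissible_def o_def)
qed

definition trim_blocks :: "nat \<Rightarrow> nat set list \<Rightarrow> nat set list" where
  "trim_blocks c Es = map (\<lambda>E. E \<inter> {c..}) (filter (\<lambda>E. E \<inter> {c..} \<noteq> {}) Es)"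

lemma admissible_trim_blocks:
  "hereditary \<F> \<Longrightarrow> spreading \<F> \<Longrightarrow> admissible \<F> Es \<Longrightarrow> admissible \<F> (trim_blocks c Es)"
  unfolding trim_blocks_def by (rule admissible_map_Int_atLeast) (auto intro: admissible_filter)

lemma trim_blocks_Min_ge:
  assumes "admissible \<F> Es" "E \<in> set (trim_blocks c Es)"
  shows "c \<le> Min E"
proof -
  obtain E' where "E' \<in> set Es" "E = E' \<inter> {c..}" "E \<noteq> {}"
    using assms(2) by (auto simp: trim_blocks_def)
  moreover have "finite E'" using assms(1) \<open>E' \<in> set Es\<close> by (simp add: admissible_def)
  ultimately show ?thesis using Min_in[of E] by auto
qed

lemma sum_list_trim_blocks:
  assumes "f (\<lambda>_. 0) = 0"
  shows "(\<Sum>E\<leftarrow>Es. f (restr (E \<inter> {c..}) x)) = (\<Sum>E\<leftarrow>trim_blocks c Es. f (restr E x))"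
  by (induction Es) (auto simp: trim_blocks_def assms)

lemma admissible_G_fam_trim_blocks:
  assumes "hereditary (Fs n)" "spreading (Fs n)" "admissible (Fs n) Es"
  shows "admissible (G_fam Fs m n) (trim_blocks (block_index m n) Es)"
proof -
  have adm: "admissible (Fs n) (trim_blocks (block_index m n) Es)"
    using assms by (rule admissible_trim_blocks)
  moreover have "\<forall>i\<in>set (map Min (trim_blocks (block_index m n) Es)). block_index m n \<le> i"
    using trim_blocks_Min_ge[OF assms(3)] by auto
  ultimately show ?thesis by (auto simp: admissible_def G_fam_def)
qed

lemma admissible_G_fam_cases:
  "admissible (G_fam Fs m n) Es \<Longrightarrow> admissible (Fs n) Es \<or> length Es \<le> 1"
  using admissible_S0_length by (auto simp: admissible_def G_fam_def)

lemma fam_norm_le: "(\<And>F. F \<in> \<F> \<Longrightarrow> (\<Sum>k\<in>F. \<bar>x k\<bar>) \<le> B) \<Longrightarrow> 0 \<le> B \<Longrightarrow> fam_norm \<F> x \<le> B"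
  unfolding fam_norm_def by (rule cSup_least) auto

locale finite_set_family =
  fixes F0 :: "nat set set"
  assumes finite_F0: "\<And>F. F \<in> F0 \<Longrightarrow> finite F"
begin

lemma sum_abs_le_l1:
  assumes "x \<in> c00" "F \<in> F0"
  shows "(\<Sum>k\<in>F. \<bar>x k\<bar>) \<le> l1_norm x"
proof -
  have fin: "finite (F \<union> supp x)" using assms by (simp add: c00_iff_finite_supp finite_F0)
  then have "(\<Sum>k\<in>F. \<bar>x k\<bar>) \<le> (\<Sum>k\<in>F \<union> supp x. \<bar>x k\<bar>)"
    by (intro sum_mono2) auto
  also have "\<dots> = l1_norm x" using fin by (simp add: weighted_l1_eq_sum[of "F \<union> supp x"])
  finally show ?thesis .
qed

lemma sum_abs_le_fam_norm: "x \<in> c00 \<Longrightarrow> F \<in> F0 \<Longrightarrow> (\<Sum>k\<in>F. \<bar>x k\<bar>) \<le> fam_norm F0 x"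
  unfolding fam_norm_def
  by (rule cSup_upper) (auto intro!: bdd_aboveI[of _ "l1_norm x"] sum_abs_le_l1 weighted_l1_nonneg)

lemma fam_norm_nonneg: "x \<in> c00 \<Longrightarrow> 0 \<le> fam_norm F0 x"
  unfolding fam_norm_def
  by (rule cSup_upper) (auto intro!: bdd_aboveI[of _ "l1_norm x"] sum_abs_le_l1 weighted_l1_nonneg)

lemma fam_norm_le_l1: "x \<in> c00 \<Longrightarrow> fam_norm F0 x \<le> l1_norm x"
  by (rule fam_norm_le) (auto intro: sum_abs_le_l1 weighted_l1_nonneg)

lemma fam_norm_restr_le: "x \<in> c00 \<Longrightarrow> fam_norm F0 (restr E x) \<le> fam_norm F0 x"
proof (rule fam_norm_le)
  fix F assume "x \<in> c00" "F \<in> F0"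
  have "(\<Sum>k\<in>F. \<bar>restr E x k\<bar>) \<le> (\<Sum>k\<in>F. \<bar>x k\<bar>)" by (intro sum_mono) (simp add: restr_def)
  also have "\<dots> \<le> fam_norm F0 x" using \<open>x \<in> c00\<close> \<open>F \<in> F0\<close> by (rule sum_abs_le_fam_norm)
  finally show "(\<Sum>k\<in>F. \<bar>restr E x k\<bar>) \<le> fam_norm F0 x" .
qed (rule fam_norm_nonneg)

lemma fam_norm_add_le:
  assumes "x \<in> c00" "y \<in> c00"
  shows "fam_norm F0 (\<lambda>k. x k + y k) \<le> fam_norm F0 x + fam_norm F0 y"
proof (rule fam_norm_le)
  fix F assume F: "F \<in> F0"
  have "(\<Sum>k\<in>F. \<bar>x k + y k\<bar>) \<le> (\<Sum>k\<in>F. \<bar>x k\<bar>) + (\<Sum>k\<in>F. \<bar>y k\<bar>)"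
    by (simp add: sum.distrib[symmetric] sum_mono abs_triangle_ineq)
  also have "\<dots> \<le> fam_norm F0 x + fam_norm F0 y"
    using assms F by (intro add_mono sum_abs_le_fam_norm)
  finally show "(\<Sum>k\<in>F. \<bar>x k + y k\<bar>) \<le> fam_norm F0 x + fam_norm F0 y" .
qed (use assms in \<open>simp add: fam_norm_nonneg\<close>)

lemma weighted_l1_le_fam_norm:
  assumes sing: "\<And>k. {k} \<in> F0" and x: "x \<in> c00"
    and w: "summable w" "\<And>k. 0 \<le> w k"
  shows "weighted_l1 w x \<le> suminf w * fam_norm F0 x"
proof -
  have "weighted_l1 w x \<le> (\<Sum>k\<in>supp x. w k * fam_norm F0 x)"
    unfolding weighted_l1_def
    using sum_abs_le_fam_norm[OF x sing] w(2) by (intro sum_mono mult_left_mono) auto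
  also have "\<dots> = (\<Sum>k\<in>supp x. w k) * fam_norm F0 x"
    by (simp add: sum_distrib_right)
  also have "\<dots> \<le> suminf w * fam_norm F0 x"
    using x w
    by (intro mult_right_mono sum_le_suminf fam_norm_nonneg) (auto simp: c00_iff_finite_supp)
  finally show ?thesis .
qed

end

section \<open>Iterates of the mixed Tsirelson norm\<close>

declare mt_iter.simps(2) [simp del]

locale mixed_tsirelson = finite_set_family F0 for F0 +
  fixes \<theta> :: "nat \<Rightarrow> real"
  assumes theta_nonneg: "\<And>n. 1 \<le> n \<Longrightarrow> 0 \<le> \<theta> n"
    and theta_le_one: "\<And>n. 1 \<le> n \<Longrightarrow> \<theta> n \<le> 1"
begin

lemma theta_mult_le: "1 \<le> n \<Longrightarrow> 0 \<le> a \<Longrightarrow> \<theta> n * a \<le> a"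
  by (simp add: mult_left_le_one_le theta_le_one theta_nonneg)

lemma mt_iter_Suc_le:
  assumes "fam_norm F0 x \<le> B" "0 \<le> B"
    "\<And>n Es. 1 \<le> n \<Longrightarrow> admissible (Fs n) Es \<Longrightarrow>
       \<theta> n * (\<Sum>E\<leftarrow>Es. mt_iter F0 \<theta> Fs j (restr E x)) \<le> B"
  shows "mt_iter F0 \<theta> Fs (Suc j) x \<le> B"
  unfolding mt_iter.simps(2) using assms by (auto intro!: cSup_least)

lemma fam_norm_le_mt_iter_Suc: "fam_norm F0 x \<le> mt_iter F0 \<theta> Fs (Suc j) x"
  by (simp add: mt_iter.simps(2))

lemma mt_iter_nonneg: "x \<in> c00 \<Longrightarrow> 0 \<le> mt_iter F0 \<theta> Fs j x"
  by (cases j) (auto intro: order_trans[OF fam_norm_nonneg fam_norm_le_mt_iter_Suc])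

lemma theta_mult_sum_le:
  "x \<in> c00 \<Longrightarrow> 1 \<le> n \<Longrightarrow>
    \<theta> n * (\<Sum>E\<leftarrow>Es. mt_iter F0 \<theta> Fs j (restr E x)) \<le> (\<Sum>E\<leftarrow>Es. mt_iter F0 \<theta> Fs j (restr E x))"
  by (auto intro!: theta_mult_le sum_list_nonneg mt_iter_nonneg restr_in_c00)

lemma theta_mult_sum_le_l1:
  assumes "x \<in> c00" "1 \<le> n" "admissible (Fs n) Es"
    and "\<And>y. y \<in> c00 \<Longrightarrow> mt_iter F0 \<theta> Fs j y \<le> l1_norm y"
  shows "\<theta> n * (\<Sum>E\<leftarrow>Es. mt_iter F0 \<theta> Fs j (restr E x)) \<le> l1_norm x"
  using theta_mult_sum_le[OF assms(1,2)] sum_list_restr_le_l1[OF assms(1,3,4)] by (rule order_trans)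

text \<open>This bound makes every supremum in the definition of \<^const>\<open>mt_iter\<close> finite.\<close>

lemma mt_iter_le_l1: "x \<in> c00 \<Longrightarrow> mt_iter F0 \<theta> Fs j x \<le> l1_norm x"
proof (induction j arbitrary: x)
  case 0
  then show ?case by (simp add: weighted_l1_nonneg)
next
  case (Suc j)
  then show ?case
    by (intro mt_iter_Suc_le theta_mult_sum_le_l1) (simp_all add: fam_norm_le_l1 weighted_l1_nonneg)
qed

lemma mt_iter_Suc_ge:
  assumes "x \<in> c00" "1 \<le> n" "admissible (Fs n) Es"
  shows "\<theta> n * (\<Sum>E\<leftarrow>Es. mt_iter F0 \<theta> Fs j (restr E x)) \<le> mt_iter F0 \<theta> Fs (Suc j) x"
proof -
  let ?T = "{\<theta> n * (\<Sum>E\<leftarrow>Es. mt_iter F0 \<theta> Fs j (restr E x)) | n Es. n \<ge> 1 \<and> admissible (Fs n) Es}"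
  have "bdd_above (insert 0 ?T)"
    using assms(1)
    by (intro bdd_aboveI[of _ "l1_norm x"])
       (auto simp: weighted_l1_nonneg intro!: theta_mult_sum_le_l1 mt_iter_le_l1)
  then have "\<theta> n * (\<Sum>E\<leftarrow>Es. mt_iter F0 \<theta> Fs j (restr E x)) \<le> Sup (insert 0 ?T)"
    using assms(2,3) by (intro cSup_upper) auto
  then show ?thesis by (simp add: mt_iter.simps(2))
qed

lemma mt_iter_mono_Suc: "x \<in> c00 \<Longrightarrow> mt_iter F0 \<theta> Fs j x \<le> mt_iter F0 \<theta> Fs (Suc j) x"
proof (induction j arbitrary: x)
  case 0
  then show ?case using mt_iter_nonneg by simp
next
  case (Suc j)
  show ?case
  proof (rule mt_iter_Suc_le)
    fix n Es assume n: "1 \<le> n" and adm: "admissible (Fs n) Es"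
    have "\<theta> n * (\<Sum>E\<leftarrow>Es. mt_iter F0 \<theta> Fs j (restr E x))
        \<le> \<theta> n * (\<Sum>E\<leftarrow>Es. mt_iter F0 \<theta> Fs (Suc j) (restr E x))"
      using Suc theta_nonneg[OF n]
      by (intro mult_left_mono sum_list_mono) (auto intro: restr_in_c00)
    also have "\<dots> \<le> mt_iter F0 \<theta> Fs (Suc (Suc j)) x"
      using Suc.prems n adm by (rule mt_iter_Suc_ge)
    finally show "\<theta> n * (\<Sum>E\<leftarrow>Es. mt_iter F0 \<theta> Fs j (restr E x)) \<le> mt_iter F0 \<theta> Fs (Suc (Suc j)) x" .
  qed (use Suc.prems in \<open>simp_all add: fam_norm_le_mt_iter_Suc mt_iter_nonneg\<close>)
qed

lemma mt_iter_restr_le: "x \<in> c00 \<Longrightarrow> mt_iter F0 \<theta> Fs j (restr A x) \<le> mt_iter F0 \<theta> Fs j x"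
proof (induction j arbitrary: x A)
  case 0
  then show ?case by simp
next
  case (Suc j)
  show ?case
  proof (rule mt_iter_Suc_le)
    show "fam_norm F0 (restr A x) \<le> mt_iter F0 \<theta> Fs (Suc j) x"
      using fam_norm_restr_le[OF Suc.prems] fam_norm_le_mt_iter_Suc by (rule order_trans)
    fix n Es assume n: "1 \<le> n" and adm: "admissible (Fs n) Es"
    have "\<theta> n * (\<Sum>E\<leftarrow>Es. mt_iter F0 \<theta> Fs j (restr E (restr A x)))
        \<le> \<theta> n * (\<Sum>E\<leftarrow>Es. mt_iter F0 \<theta> Fs j (restr E x))"
    proof (intro mult_left_mono sum_list_mono)
      fix E
      show "mt_iter F0 \<theta> Fs j (restr E (restr A x)) \<le> mt_iter F0 \<theta> Fs j (restr E x)"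
        unfolding restr_commute[of E] using Suc.prems by (intro Suc.IH restr_in_c00)
    qed (rule theta_nonneg[OF n])
    also have "\<dots> \<le> mt_iter F0 \<theta> Fs (Suc j) x"
      using Suc.prems n adm by (rule mt_iter_Suc_ge)
    finally show "\<theta> n * (\<Sum>E\<leftarrow>Es. mt_iter F0 \<theta> Fs j (restr E (restr A x)))
      \<le> mt_iter F0 \<theta> Fs (Suc j) x" .
  qed (rule mt_iter_nonneg[OF Suc.prems])
qed

lemma mt_iter_add_le:
  "x \<in> c00 \<Longrightarrow> y \<in> c00 \<Longrightarrow>
    mt_iter F0 \<theta> Fs j (\<lambda>k. x k + y k) \<le> mt_iter F0 \<theta> Fs j x + mt_iter F0 \<theta> Fs j y"
proof (induction j arbitrary: x y)
  case 0
  then show ?case by simp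
next
  case (Suc j)
  let ?N = "mt_iter F0 \<theta> Fs j"
  show ?case
  proof (rule mt_iter_Suc_le)
    show "fam_norm F0 (\<lambda>k. x k + y k) \<le> mt_iter F0 \<theta> Fs (Suc j) x + mt_iter F0 \<theta> Fs (Suc j) y"
      using fam_norm_add_le[OF Suc.prems]
        fam_norm_le_mt_iter_Suc[of x Fs j] fam_norm_le_mt_iter_Suc[of y Fs j]
      by linarith
    fix n Es assume n: "1 \<le> n" and adm: "admissible (Fs n) Es"
    have "\<theta> n * (\<Sum>E\<leftarrow>Es. ?N (restr E (\<lambda>k. x k + y k)))
        \<le> \<theta> n * (\<Sum>E\<leftarrow>Es. ?N (restr E x) + ?N (restr E y))"
    proof (intro mult_left_mono sum_list_mono)
      fix E
      show "?N (restr E (\<lambda>k. x k + y k)) \<le> ?N (restr E x) + ?N (restr E y)"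
        unfolding restr_add using Suc.prems by (intro Suc.IH restr_in_c00)
    qed (rule theta_nonneg[OF n])
    also have "\<dots> = \<theta> n * (\<Sum>E\<leftarrow>Es. ?N (restr E x)) + \<theta> n * (\<Sum>E\<leftarrow>Es. ?N (restr E y))"
      by (simp only: sum_list_addf distrib_left)
    also have "\<dots> \<le> mt_iter F0 \<theta> Fs (Suc j) x + mt_iter F0 \<theta> Fs (Suc j) y"
      using Suc.prems n adm by (intro add_mono mt_iter_Suc_ge)
    finally show "\<theta> n * (\<Sum>E\<leftarrow>Es. ?N (restr E (\<lambda>k. x k + y k)))
        \<le> mt_iter F0 \<theta> Fs (Suc j) x + mt_iter F0 \<theta> Fs (Suc j) y" .
  qed (intro add_nonneg_nonneg mt_iter_nonneg Suc.prems)+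
qed

lemma mt_iter_le_if_admissible_cases:
  assumes cases: "\<And>n Es. 1 \<le> n \<Longrightarrow> admissible (Gs n) Es \<Longrightarrow> admissible (Fs n) Es \<or> length Es \<le> 1"
  shows "x \<in> c00 \<Longrightarrow> mt_iter F0 \<theta> Gs j x \<le> mt_iter F0 \<theta> Fs j x"
proof (induction j arbitrary: x)
  case 0
  then show ?case by simp
next
  case (Suc j)
  show ?case
  proof (rule mt_iter_Suc_le)
    fix n Es assume n: "1 \<le> n" and adm: "admissible (Gs n) Es"
    have "\<theta> n * (\<Sum>E\<leftarrow>Es. mt_iter F0 \<theta> Gs j (restr E x))
        \<le> \<theta> n * (\<Sum>E\<leftarrow>Es. mt_iter F0 \<theta> Fs j (restr E x))"
      using Suc theta_nonneg[OF n]
      by (intro mult_left_mono sum_list_mono) (auto intro: restr_in_c00)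
    also have "\<dots> \<le> mt_iter F0 \<theta> Fs (Suc j) x"
      using cases[OF n adm]
    proof
      assume "admissible (Fs n) Es"
      then show ?thesis using Suc.prems n by (intro mt_iter_Suc_ge)
    next
      assume "length Es \<le> 1"
      then have "(\<Sum>E\<leftarrow>Es. mt_iter F0 \<theta> Fs j (restr E x)) \<le> mt_iter F0 \<theta> Fs j x"
        using Suc.prems by (cases Es) (auto simp: mt_iter_nonneg mt_iter_restr_le)
      with theta_mult_sum_le[OF Suc.prems n, where Fs=Fs and j=j and Es=Es]
        mt_iter_mono_Suc[OF Suc.prems, where Fs=Fs and j=j] show ?thesis
        by linarith
    qed
    finally show "\<theta> n * (\<Sum>E\<leftarrow>Es. mt_iter F0 \<theta> Gs j (restr E x)) \<le> mt_iter F0 \<theta> Fs (Suc j) x" .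
  qed (use Suc.prems in \<open>simp_all add: fam_norm_le_mt_iter_Suc mt_iter_nonneg\<close>)
qed

lemma mt_norm_le_add:
  assumes "x \<in> c00" "\<And>j. mt_iter F0 \<theta> Fs j x \<le> mt_iter F0 \<theta> Gs j x + c"
  shows "mt_norm F0 \<theta> Fs x \<le> mt_norm F0 \<theta> Gs x + c"
  unfolding mt_norm_def
proof (rule cSUP_least)
  fix j
  have "bdd_above (range (\<lambda>j. mt_iter F0 \<theta> Gs j x))"
    using assms(1) mt_iter_le_l1 by (intro bdd_aboveI2)
  then have "mt_iter F0 \<theta> Gs j x \<le> (SUP j. mt_iter F0 \<theta> Gs j x)"
    by (rule cSUP_upper[rotated]) simp
  then show "mt_iter F0 \<theta> Fs j x \<le> (SUP j. mt_iter F0 \<theta> Gs j x) + c"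
    using assms(2)[of j] by linarith
qed simp

lemma fam_norm_le_mt_norm:
  assumes x: "x \<in> c00"
  shows "fam_norm F0 x \<le> mt_norm F0 \<theta> Fs x"
proof -
  have "fam_norm F0 x \<le> mt_iter F0 \<theta> Fs (Suc 0) x"
    by (rule fam_norm_le_mt_iter_Suc)
  also have "\<dots> \<le> mt_norm F0 \<theta> Fs x"
    unfolding mt_norm_def using x mt_iter_le_l1 by (intro cSUP_upper bdd_aboveI2) auto
  finally show ?thesis .
qed

lemma mt_iter_zero: "mt_iter F0 \<theta> Fs j (\<lambda>_. 0) = 0"
proof -
  have "(\<lambda>_. 0::real) \<in> c00" by (simp add: c00_def)
  moreover have "l1_norm (\<lambda>_. 0) = 0" by (simp add: weighted_l1_def supp_def)
  ultimately show ?thesis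
    using mt_iter_nonneg mt_iter_le_l1 by (metis order_antisym)
qed

end

section \<open>Restricting the families beyond the block index\<close>

definition dyadic_weight :: "nat \<Rightarrow> real" where
  "dyadic_weight k = 2 * (1/2) ^ k"

lemma dyadic_weight_nonneg: "0 \<le> dyadic_weight k"
  by (simp add: dyadic_weight_def)

lemma dyadic_weight_sums: "dyadic_weight sums 4"
  unfolding dyadic_weight_def using sums_mult[OF geometric_sums[of "1/2::real"], of 2] by simp

locale block_restriction = mixed_tsirelson "Fs 0" \<theta> for Fs :: "nat \<Rightarrow> nat set set" and \<theta> +
  fixes m :: "nat \<Rightarrow> nat"
  assumes hereditary_Fs: "\<And>n. hereditary (Fs n)"
    and spreading_Fs: "\<And>n. spreading (Fs n)"
    and theta_Suc_le: "\<And>n. 1 \<le> n \<Longrightarrow> \<theta> (Suc n) \<le> \<theta> n"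
    and strict_mono_m: "strict_mono m"
    and m_0: "m 0 = 0"
    and theta_m_Suc_le: "\<And>k. 1 \<le> k \<Longrightarrow> \<theta> (m (Suc k)) \<le> \<theta> (m k) / 2"
begin

lemma theta_antimono:
  assumes "1 \<le> a" "a \<le> b"
  shows "\<theta> b \<le> \<theta> a"
  using assms(2)
proof (induction b rule: dec_induct)
  case base
  then show ?case by simp
next
  case (step n)
  then show ?case using theta_Suc_le[of n] assms(1) by linarith
qed

lemma theta_m_le_dyadic_weight: "1 \<le> k \<Longrightarrow> \<theta> (m k) \<le> dyadic_weight k"
proof (induction k rule: nat_induct_at_least)
  case base
  have "1 \<le> m 1" using strict_monoD[OF strict_mono_m, of 0 1] m_0 by simp
  then show ?case using theta_le_one by (simp add: dyadic_weight_def)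
next
  case (Suc k)
  then show ?case using theta_m_Suc_le[of k] by (simp add: dyadic_weight_def)
qed

lemma theta_le_dyadic_weight:
  assumes n: "1 \<le> n" and k: "k < block_index m n"
  shows "\<theta> n \<le> dyadic_weight k"
proof (cases "k = 0")
  case True
  then show ?thesis using theta_le_one[OF n] by (simp add: dyadic_weight_def)
next
  case False
  have "m k < n" using not_less_Least[OF k[unfolded block_index_def]] by simp
  moreover have "k \<le> m k" using strict_mono_m by (rule strict_mono_imp_increasing)
  ultimately have "\<theta> n \<le> \<theta> (m k)" using False by (intro theta_antimono) auto
  also have "\<dots> \<le> dyadic_weight k" using False by (intro theta_m_le_dyadic_weight) simp
  finally show ?thesis .
qed

lemma mt_iter_G_fam_le: "x \<in> c00 \<Longrightarrow> mt_iter (Fs 0) \<theta> (G_fam Fs m) j x \<le> mt_iter (Fs 0) \<theta> Fs j x"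
  by (rule mt_iter_le_if_admissible_cases) (rule admissible_G_fam_cases)

lemma theta_mult_sum_low_le:
  assumes x: "x \<in> c00" and n: "1 \<le> n" and adm: "admissible (Fs n) Es"
  shows "\<theta> n * (\<Sum>E\<leftarrow>Es. mt_iter (Fs 0) \<theta> Fs j (restr E (restr {..<block_index m n} x)))
    \<le> weighted_l1 dyadic_weight (restr {..<block_index m n} x)"
proof -
  let ?y = "restr {..<block_index m n} x"
  have "\<theta> n * (\<Sum>E\<leftarrow>Es. mt_iter (Fs 0) \<theta> Fs j (restr E ?y)) \<le> \<theta> n * l1_norm ?y"
    using restr_in_c00[OF x] adm mt_iter_le_l1
    by (intro mult_left_mono sum_list_restr_le_l1 theta_nonneg n)
  also have "\<dots> = weighted_l1 (\<lambda>_. \<theta> n) ?y"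
    by (simp add: weighted_l1_scale)
  also have "\<dots> \<le> weighted_l1 dyadic_weight ?y"
    by (rule weighted_l1_mono)
       (auto simp: restr_def intro: theta_le_dyadic_weight[OF n] split: if_splits)
  finally show ?thesis .
qed

lemma theta_mult_sum_high_le:
  assumes x: "x \<in> c00" and n: "1 \<le> n" and adm: "admissible (Fs n) Es"
    and IH: "\<And>y. y \<in> c00 \<Longrightarrow> mt_iter (Fs 0) \<theta> Fs j y
      \<le> mt_iter (Fs 0) \<theta> (G_fam Fs m) j y + weighted_l1 dyadic_weight y"
  shows "\<theta> n * (\<Sum>E\<leftarrow>trim_blocks (block_index m n) Es. mt_iter (Fs 0) \<theta> Fs j (restr E x))
    \<le> mt_iter (Fs 0) \<theta> (G_fam Fs m) (Suc j) x
      + weighted_l1 dyadic_weight (restr {block_index m n..} x)"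
proof -
  let ?c = "block_index m n"
  let ?Es = "trim_blocks ?c Es"
  let ?G = "mt_iter (Fs 0) \<theta> (G_fam Fs m) j" and ?W = "weighted_l1 dyadic_weight"
  have adm': "admissible (G_fam Fs m n) ?Es"
    using hereditary_Fs spreading_Fs adm by (rule admissible_G_fam_trim_blocks)
  have "\<theta> n * (\<Sum>E\<leftarrow>?Es. mt_iter (Fs 0) \<theta> Fs j (restr E x))
      \<le> \<theta> n * (\<Sum>E\<leftarrow>?Es. ?G (restr E x)) + \<theta> n * (\<Sum>E\<leftarrow>?Es. ?W (restr E x))"
    using IH restr_in_c00[OF x] theta_nonneg[OF n]
    by (simp add: distrib_left[symmetric] sum_list_addf[symmetric] mult_left_mono sum_list_mono)
  also have "\<theta> n * (\<Sum>E\<leftarrow>?Es. ?G (restr E x)) \<le> mt_iter (Fs 0) \<theta> (G_fam Fs m) (Suc j) x"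
    using x n adm' by (rule mt_iter_Suc_ge)
  also have "\<theta> n * (\<Sum>E\<leftarrow>?Es. ?W (restr E x)) \<le> (\<Sum>E\<leftarrow>?Es. ?W (restr E x))"
    using n
    by (intro theta_mult_le sum_list_nonneg) (auto intro: weighted_l1_nonneg dyadic_weight_nonneg)
  also have "(\<Sum>E\<leftarrow>?Es. ?W (restr E x)) = (\<Sum>E\<leftarrow>?Es. ?W (restr E (restr {?c..} x)))"
  proof (rule arg_cong[where f=sum_list], rule map_cong)
    fix E assume "E \<in> set ?Es"
    then have "E \<subseteq> {?c..}" by (auto simp: trim_blocks_def)
    then show "?W (restr E x) = ?W (restr E (restr {?c..} x))"
      by (simp add: restr_restr Int_absorb2)
  qed simp
  also have "\<dots> \<le> ?W (restr {?c..} x)"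
    using restr_in_c00[OF x] admissible_disjoint[OF adm']
    by (rule sum_list_weighted_l1_restr_le) (rule dyadic_weight_nonneg)
  finally show ?thesis by simp
qed

lemma mt_iter_le_G_fam_plus_weight:
  "x \<in> c00 \<Longrightarrow> mt_iter (Fs 0) \<theta> Fs j x
     \<le> mt_iter (Fs 0) \<theta> (G_fam Fs m) j x + weighted_l1 dyadic_weight x"
proof (induction j arbitrary: x)
  case 0
  then show ?case by (simp add: weighted_l1_nonneg dyadic_weight_nonneg)
next
  case (Suc j)
  let ?N = "mt_iter (Fs 0) \<theta> Fs j" and ?W = "weighted_l1 dyadic_weight"
  have W_nonneg: "0 \<le> ?W y" for y by (intro weighted_l1_nonneg dyadic_weight_nonneg)
  show ?case
  proof (rule mt_iter_Suc_le)
    fix n Es assume n: "1 \<le> n" and adm: "admissible (Fs n) Es"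
    define c where "c = block_index m n"
    have "(\<Sum>E\<leftarrow>Es. ?N (restr E x))
        \<le> (\<Sum>E\<leftarrow>Es. ?N (restr E (restr {..<c} x)) + ?N (restr (E \<inter> {c..}) x))"
      using restr_split_at[of _ x c] Suc.prems
      by (intro sum_list_mono) (metis mt_iter_add_le restr_in_c00)
    also have "\<dots> = (\<Sum>E\<leftarrow>Es. ?N (restr E (restr {..<c} x))) + (\<Sum>E\<leftarrow>trim_blocks c Es. ?N (restr E x))"
      by (simp add: sum_list_addf sum_list_trim_blocks mt_iter_zero)
    finally have "\<theta> n * (\<Sum>E\<leftarrow>Es. ?N (restr E x))
        \<le> \<theta> n * (\<Sum>E\<leftarrow>Es. ?N (restr E (restr {..<c} x)))
          + \<theta> n * (\<Sum>E\<leftarrow>trim_blocks c Es. ?N (restr E x))"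
      using theta_nonneg[OF n] by (simp add: distrib_left[symmetric] mult_left_mono)
    also have "\<dots>
        \<le> ?W (restr {..<c} x) + (mt_iter (Fs 0) \<theta> (G_fam Fs m) (Suc j) x + ?W (restr {c..} x))"
      unfolding c_def using Suc.prems n adm Suc.IH
      by (intro add_mono theta_mult_sum_low_le theta_mult_sum_high_le)
    also have "\<dots> = mt_iter (Fs 0) \<theta> (G_fam Fs m) (Suc j) x + ?W x"
      using weighted_l1_split[OF Suc.prems, of dyadic_weight "{..<c}"] by (simp add: Compl_lessThan)
    finally show "\<theta> n * (\<Sum>E\<leftarrow>Es. ?N (restr E x)) \<le> mt_iter (Fs 0) \<theta> (G_fam Fs m) (Suc j) x + ?W x" .
  qed (use Suc.prems W_nonneg fam_norm_le_mt_iter_Suc mt_iter_nonneg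
       in \<open>auto intro: add_increasing2 add_nonneg_nonneg\<close>)
qed

end

theorem proposition1:
  fixes Fs :: "nat \<Rightarrow> nat set set" and \<theta> :: "nat \<Rightarrow> real" and m :: "nat \<Rightarrow> nat"
  assumes reg: "\<And>n. regular_family (Fs n)"
    and sing: "\<And>k. {k} \<in> Fs 0"
    and theta_range: "\<And>n. n \<ge> 1 \<Longrightarrow> 0 < \<theta> n \<and> \<theta> n < 1"
    and theta_noninc: "\<And>n. n \<ge> 1 \<Longrightarrow> \<theta> (Suc n) \<le> \<theta> n"
    and theta_null: "(\<lambda>n. \<theta> n) \<longlonglongrightarrow> 0"
    and m_mono: "strict_mono m"
    and m0: "m 0 = 0"
    and m_theta: "\<And>k. k \<ge> 1 \<Longrightarrow> \<theta> (m (Suc k)) \<le> \<theta> (m k) / 2"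
  shows "\<exists>C>0. \<forall>x\<in>c00.
           mt_norm (Fs 0) \<theta> (G_fam Fs m) x \<le> C * mt_norm (Fs 0) \<theta> Fs x \<and>
           mt_norm (Fs 0) \<theta> Fs x \<le> C * mt_norm (Fs 0) \<theta> (G_fam Fs m) x"
proof -
  interpret block_restriction Fs \<theta> m
    using reg theta_range theta_noninc m_mono m0 m_theta
    by unfold_locales (auto simp: regular_family_def less_imp_le)
  have "mt_norm (Fs 0) \<theta> (G_fam Fs m) x \<le> 5 * mt_norm (Fs 0) \<theta> Fs x \<and>
        mt_norm (Fs 0) \<theta> Fs x \<le> 5 * mt_norm (Fs 0) \<theta> (G_fam Fs m) x" if x: "x \<in> c00" for x
  proof -
    have "mt_norm (Fs 0) \<theta> (G_fam Fs m) x \<le> mt_norm (Fs 0) \<theta> Fs x + 0"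
      using x by (intro mt_norm_le_add) (simp_all add: mt_iter_G_fam_le)
    moreover have
      "mt_norm (Fs 0) \<theta> Fs x \<le> mt_norm (Fs 0) \<theta> (G_fam Fs m) x + weighted_l1 dyadic_weight x"
      using x by (intro mt_norm_le_add mt_iter_le_G_fam_plus_weight)
    moreover have "weighted_l1 dyadic_weight x \<le> 4 * fam_norm (Fs 0) x"
      using weighted_l1_le_fam_norm
        [OF sing x sums_summable[OF dyadic_weight_sums] dyadic_weight_nonneg]
      by (simp add: sums_unique[OF dyadic_weight_sums, symmetric])
    moreover have "fam_norm (Fs 0) x \<le> mt_norm (Fs 0) \<theta> (G_fam Fs m) x"
      using x by (rule fam_norm_le_mt_norm)
    moreover have "0 \<le> fam_norm (Fs 0) x"
      using x by (rule fam_norm_nonneg)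
    ultimately show ?thesis by linarith
  qed
  then show ?thesis by (intro exI[of _ 5]) auto
qed

end
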